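(* Let $\mathbf P=UV^\top$ be the transition matrix of a Markov chain on $\{1,\dots,p\}$ with stationary distribution $\pi$ having all entries positive, where $U,V\in\mathbb R^{p\times r}$ are entrywise nonnegative with $U\mathbf 1_r=\mathbf 1_p$, $V^\top\mathbf 1_p=\mathbf 1_r$, each meta-state has an anchor state, and $\mathrm{rank}(U)=r$. Let $\mathbf H=[\mathbf h_1,\dots,\mathbf h_r]$ contain the right singular vectors of $\mathbf Q=\mathrm{diag}(\pi)\mathbf P[\mathrm{diag}(\pi)]^{-1/2}$ associated with its nonzero singular values, assume $\mathbf h_1$ has all coordinates positive, let $\mathbf D=[\mathrm{diag}(\mathbf h_1)]^{-1}[\mathbf h_2,\dots,\mathbf h_r]$ with rows $\mathbf d_1^\top,\dots,\mathbf d_p^\top$, let $\mathbf L\in\mathbb R^{r\times r}$ be the invertible matrix with $\mathbf H=[\mathrm{diag}(\pi)]^{-1/2}V\mathbf L$, with columns $\mathbf l_1,\dots,\mathbf l_r$, and let $\mathbf b_1^\top,\dots,\mathbf b_r^\top$ be the rows of $[\mathrm{diag}(\mathbf l_1)]^{-1}[\mathbf l_2,\dots,\mathbf l_r]$ (the vertices of the simplex $\mathcal S_0^*$ containing all $\mathbf d_j$). Then each row of $\mathbf D$ is a convex combination of $\mathbf b_1,\dots,\mathbf b_r$: for each $j$ there is a unique $\mathbf w_j$ in the standard simplex of $\mathbb R^r$ with $\mathbf d_j=\sum_{k=1}^r\mathbf w_j(k)\mathbf b_k$. Furthermore, the matrix $W\in\mathbb R^{p\times r}$ whose $j$-th row is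 $\mathbf w_j^\top$ satisfies $$[\mathrm{diag}(\mathbf h_1)][\mathrm{diag}(\pi)]^{1/2}W=V[\mathrm{diag}(\mathbf l_1)].$$
   Context: A state $j$ is an anchor state of meta-state $k$ if $V_{jk}>0$ and $V_{js}=0$ for all $s\neq k$. The standard simplex of $\mathbb R^r$ is $\{\mathbf w\in\mathbb R^r:\mathbf w\ge0,\ \sum_k\mathbf w(k)=1\}$. *)

theory Defs
  imports "Jordan_Normal_Form.DL_Rank"
begin

definition diag_of_vec :: "real vec \<Rightarrow> real mat" where
  "diag_of_vec v = mat (dim_vec v) (dim_vec v) (\<lambda>(i,j). if i = j then v $ i else 0)"

definition std_simplex :: "nat \<Rightarrow> real vec set" where
  "std_simplex r = {w \<in> carrier_vec r. (\<forall>k<r. w $ k \<ge> 0) \<and> (\<Sum>k<r. w $ k) = 1}"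

definition anchor_state :: "real mat \<Rightarrow> nat \<Rightarrow> nat \<Rightarrow> bool" where
  "anchor_state V j k \<longleftrightarrow> V $$ (j,k) > 0 \<and> (\<forall>s<dim_col V. s \<noteq> k \<longrightarrow> V $$ (j,s) = 0)"

text \<open>Compact SVD data: the columns of H (p x r) are right singular vectors of Q
  associated with its nonzero singular values, i.e. Q = G diag(sigma) H^T with
  G, H having orthonormal columns and sigma > 0.\<close>
definition right_sing_vecs_nonzero :: "nat \<Rightarrow> nat \<Rightarrow> real mat \<Rightarrow> real mat \<Rightarrow> bool" where
  "right_sing_vecs_nonzero p r Q H \<longleftrightarrow>
     H \<in> carrier_mat p r \<and> H\<^sup>T * H = 1\<^sub>m r \<and>
     (\<exists>G \<sigma>. G \<in> carrier_mat p r \<and> G\<^sup>T * G = 1\<^sub>m r \<and> \<sigma> \<in> carrier_vec r \<and>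
        (\<forall>k<r. \<sigma> $ k > 0) \<and> Q = G * diag_of_vec \<sigma> * H\<^sup>T)"

end

theory Submission
  imports Defs
begin

(*
  Put C = V L. As H = diag(pi)^(-1/2) C rescales the rows of C by positive factors, d_j is the
  j-th row of C divided by its first entry C_j1, and likewise b_k is the k-th row of L divided
  by L_k1. For w in R^r and z_k = w_k / L_k1 one has L^T z = (sum_k w_k, B^T w), so w is a
  simplex coordinate vector of d_j iff L^T z = (1, d_j) = L^T v_j / C_j1, where v_j is the j-th
  row of V. As L is invertible this pins down z = v_j / C_j1, i.e. w_k = V_jk L_k1 / C_j1.
  An anchor state j of meta-state k gives C_j1 = V_jk L_k1, so positivity of h_1 forces
  L_k1 > 0 and hence w >= 0. Finally C_j1 is the j-th diagonal entry of
  diag(h_1) diag(pi)^(1/2), which turns C_j1 w_k = V_jk L_k1 into the matrix identity.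
*)

lemma diag_of_vec_mult:
  assumes "A \<in> carrier_mat n m" "v \<in> carrier_vec n"
  shows "diag_of_vec v * A = mat n m (\<lambda>(i,j). v $ i * A $$ (i,j))"
proof -
  have "row (diag_of_vec v) i = v $ i \<cdot>\<^sub>v unit_vec n i" if "i < n" for i
    using that assms by (auto simp: diag_of_vec_def unit_vec_def)
  then show ?thesis
    using assms by (intro eq_matI) (auto simp: diag_of_vec_def[of v])
qed

lemma index_diag_of_vec_mult:
  assumes "A \<in> carrier_mat n m" "v \<in> carrier_vec n" "i < n" "j < m"
  shows "(diag_of_vec v * A) $$ (i, j) = v $ i * A $$ (i, j)"
  using assms by (simp add: diag_of_vec_mult del: index_mult_mat)

lemma index_mult_diag_of_vec:
  assumes "A \<in> carrier_mat n m" "v \<in> carrier_vec m" "i < n" "j < m"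
  shows "(A * diag_of_vec v) $$ (i, j) = A $$ (i, j) * v $ j"
proof -
  have "col (diag_of_vec v) j = v $ j \<cdot>\<^sub>v unit_vec m j"
    using assms by (auto simp: diag_of_vec_def unit_vec_def)
  then show ?thesis
    using assms by (simp add: diag_of_vec_def[of v])
qed

lemma diag_of_vec_mult_diag_of_vec:
  assumes "a \<in> carrier_vec n" "b \<in> carrier_vec n"
  shows "diag_of_vec a * diag_of_vec b = diag_of_vec (vec n (\<lambda>i. a $ i * b $ i))"
proof -
  have "diag_of_vec b \<in> carrier_mat n n"
    using assms by (simp add: diag_of_vec_def)
  then show ?thesis
    using assms by (simp add: diag_of_vec_mult) (auto simp: diag_of_vec_def)
qed

lemma diag_first_col_diag_of_vec_mult:
  assumes A: "A \<in> carrier_mat n m" "0 < m" and s: "s \<in> carrier_vec n" "\<forall>i<n. s $ i \<noteq> 0"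
  shows "diag_of_vec (col (diag_of_vec s * A) 0) * diag_of_vec (map_vec inverse s) = diag_of_vec (col A 0)"
proof -
  have sA: "diag_of_vec s * A \<in> carrier_mat n m"
    by (rule mult_carrier_mat[OF _ A(1)]) (use s in \<open>simp add: diag_of_vec_def\<close>)
  have "col (diag_of_vec s * A) 0 $ i * map_vec inverse s $ i = A $$ (i, 0)" if "i < n" for i
  proof -
    have "col (diag_of_vec s * A) 0 $ i = s $ i * A $$ (i, 0)"
      using sA A s that index_diag_of_vec_mult[OF A(1) s(1) that A(2)] by (simp del: index_mult_mat)
    then show ?thesis
      using s that by simp
  qed
  then have col_A: "vec n (\<lambda>i. col (diag_of_vec s * A) 0 $ i * map_vec inverse s $ i) = col A 0"
    using carrier_matD[OF A(1)] A(2) by (intro eq_vecI) auto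
  show ?thesis
    unfolding col_A[symmetric] by (rule diag_of_vec_mult_diag_of_vec[OF col_carrier_vec[OF A(2) sA]]) (use s in simp)
qed

lemma invertible_mat_transpose_mult_vec_inj:
  fixes L :: "real mat"
  assumes L: "L \<in> carrier_mat n n" "invertible_mat L"
    and xy: "x \<in> carrier_vec n" "y \<in> carrier_vec n" "L\<^sup>T *\<^sub>v x = L\<^sup>T *\<^sub>v y"
  shows "x = y"
proof -
  obtain M where right_inv: "L * M = 1\<^sub>m n" and left_inv: "M * L = 1\<^sub>m (dim_row M)"
    using L unfolding invertible_mat_def inverts_mat_def by auto
  have "dim_col M = n" "dim_row M = n"
    using arg_cong[OF right_inv, of dim_col] arg_cong[OF left_inv, of dim_col] L(1) by auto
  then have M: "M \<in> carrier_mat n n" "L * M = 1\<^sub>m n"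
    using right_inv by auto
  have "M\<^sup>T * L\<^sup>T = 1\<^sub>m n"
    using M L by (metis transpose_mult transpose_one)
  then have "x = M\<^sup>T *\<^sub>v (L\<^sup>T *\<^sub>v x)" "y = M\<^sup>T *\<^sub>v (L\<^sup>T *\<^sub>v y)"
    using M L xy by (metis assoc_mult_mat_vec one_mult_mat_vec transpose_carrier_mat)+
  then show ?thesis
    using xy by simp
qed

lemma row_mult_transpose_mult_vec:
  fixes A B :: "'a :: comm_semiring_0 mat"
  assumes "A \<in> carrier_mat n m" "B \<in> carrier_mat m l" "i < n"
  shows "row (A * B) i = B\<^sup>T *\<^sub>v row A i"
  using assms by (intro eq_vecI) (auto simp: comm_scalar_prod[of "row A i" m])

definition ratios_to_first_col :: "real mat \<Rightarrow> real mat" where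
  "ratios_to_first_col A = diag_of_vec (map_vec inverse (col A 0))
     * mat (dim_row A) (dim_col A - 1) (\<lambda>(i,m). A $$ (i, m + 1))"

lemma ratios_to_first_col_eq:
  "ratios_to_first_col A = mat (dim_row A) (dim_col A - 1) (\<lambda>(i,m). A $$ (i, m + 1) / A $$ (i, 0))"
  unfolding ratios_to_first_col_def
  by (subst diag_of_vec_mult[of _ "dim_row A" "dim_col A - 1"]) (auto simp: divide_inverse_commute)

lemma ratios_to_first_col_diag_mult:
  assumes "A \<in> carrier_mat n m" "s \<in> carrier_vec n" "\<forall>i<n. s $ i \<noteq> 0"
  shows "ratios_to_first_col (diag_of_vec s * A) = ratios_to_first_col A"
  using assms by (auto simp: ratios_to_first_col_eq diag_of_vec_mult)

lemma vCons_one_row_ratios_to_first_col: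
  assumes "i < dim_row A" "0 < dim_col A" "A $$ (i, 0) \<noteq> 0"
  shows "vCons 1 (row (ratios_to_first_col A) i) = (1 / A $$ (i, 0)) \<cdot>\<^sub>v row A i"
  using assms by (intro eq_vecI) (auto simp: ratios_to_first_col_eq vec_index_vCons)

lemma transpose_ratios_to_first_col_mult_vec:
  assumes "L \<in> carrier_mat n r" "0 < r" "\<forall>k<n. L $$ (k, 0) \<noteq> 0" "w \<in> carrier_vec n"
  shows "L\<^sup>T *\<^sub>v vec n (\<lambda>k. w $ k / L $$ (k, 0)) = vCons (\<Sum>k<n. w $ k) ((ratios_to_first_col L)\<^sup>T *\<^sub>v w)"
proof (rule eq_vecI)
  fix m assume "m < dim_vec (vCons (\<Sum>k<n. w $ k) ((ratios_to_first_col L)\<^sup>T *\<^sub>v w))"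
  then show "(L\<^sup>T *\<^sub>v vec n (\<lambda>k. w $ k / L $$ (k, 0))) $ m = vCons (\<Sum>k<n. w $ k) ((ratios_to_first_col L)\<^sup>T *\<^sub>v w) $ m"
    using assms by (cases m) (auto simp: ratios_to_first_col_eq scalar_prod_def atLeast0LessThan intro!: sum.cong)
qed (use assms in \<open>auto simp: ratios_to_first_col_eq\<close>)

lemma ratios_to_first_col_std_simplex_coords_iff:
  fixes L :: "real mat"
  assumes L: "L \<in> carrier_mat r r" "invertible_mat L" "\<forall>k<r. L $$ (k, 0) > 0"
    and z: "z \<in> carrier_vec r" "\<forall>k<r. z $ k \<ge> 0" "L\<^sup>T *\<^sub>v z = vCons 1 d"
  shows "w \<in> std_simplex r \<and> d = (ratios_to_first_col L)\<^sup>T *\<^sub>v w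
    \<longleftrightarrow> w = vec r (\<lambda>k. L $$ (k, 0) * z $ k)"
proof -
  have "r = dim_vec (L\<^sup>T *\<^sub>v z)"
    using L by simp
  then have r: "0 < r"
    using z by simp
  have L0: "\<forall>k<r. L $$ (k, 0) \<noteq> 0"
    using L by force
  have homog: "L\<^sup>T *\<^sub>v vec r (\<lambda>k. w $ k / L $$ (k, 0)) = vCons (\<Sum>k<r. w $ k) ((ratios_to_first_col L)\<^sup>T *\<^sub>v w)"
    if "w \<in> carrier_vec r" for w
    using transpose_ratios_to_first_col_mult_vec[OF L(1) r L0 that] .
  show ?thesis
  proof
    assume w: "w \<in> std_simplex r \<and> d = (ratios_to_first_col L)\<^sup>T *\<^sub>v w"
    then have "L\<^sup>T *\<^sub>v vec r (\<lambda>k. w $ k / L $$ (k, 0)) = L\<^sup>T *\<^sub>v z"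
      using homog z by (auto simp: std_simplex_def)
    then have "vec r (\<lambda>k. w $ k / L $$ (k, 0)) = z"
      using invertible_mat_transpose_mult_vec_inj[OF L(1,2)] z by auto
    then show "w = vec r (\<lambda>k. L $$ (k, 0) * z $ k)"
      using w L0 by (auto simp: std_simplex_def)
  next
    assume w: "w = vec r (\<lambda>k. L $$ (k, 0) * z $ k)"
    then have "vec r (\<lambda>k. w $ k / L $$ (k, 0)) = z"
      using z L0 by auto
    then have "vCons (\<Sum>k<r. w $ k) ((ratios_to_first_col L)\<^sup>T *\<^sub>v w) = vCons 1 d"
      using homog[of w] w z by simp
    then show "w \<in> std_simplex r \<and> d = (ratios_to_first_col L)\<^sup>T *\<^sub>v w"
      using w L z by (auto simp: std_simplex_def less_imp_le)
  qed
qed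

lemma anchor_state_mult_index:
  assumes "anchor_state V j k" "V \<in> carrier_mat p r" "L \<in> carrier_mat r n" "j < p" "k < r" "m < n"
  shows "(V * L) $$ (j, m) = V $$ (j, k) * L $$ (k, m)"
proof -
  have "(V * L) $$ (j, m) = (\<Sum>s\<in>{0..<r}. V $$ (j, s) * L $$ (s, m))"
    using assms by (simp add: scalar_prod_def)
  also have "\<dots> = (\<Sum>s\<in>{0..<r}. if s = k then V $$ (j, k) * L $$ (k, m) else 0)"
    using assms by (intro sum.cong) (auto simp: anchor_state_def)
  finally show ?thesis
    using assms by simp
qed

lemma anchor_states_imp_first_col_pos:
  assumes V: "V \<in> carrier_mat p r" "\<forall>k<r. \<exists>j<p. anchor_state V j k"
    and L: "L \<in> carrier_mat r r" and VL: "\<forall>j<p. (V * L) $$ (j, 0) > 0"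
  shows "\<forall>k<r. L $$ (k, 0) > 0"
proof (intro allI impI)
  fix k assume k: "k < r"
  then obtain j where j: "j < p" "anchor_state V j k"
    using V by blast
  have "0 < (V * L) $$ (j, 0)"
    using VL j(1) by blast
  also have "\<dots> = V $$ (j, k) * L $$ (k, 0)"
    by (rule anchor_state_mult_index[OF j(2) V(1) L j(1) k]) (use k in simp)
  finally have "0 < V $$ (j, k) * L $$ (k, 0)" .
  moreover have "V $$ (j, k) > 0"
    using j(2) by (simp add: anchor_state_def)
  ultimately show "L $$ (k, 0) > 0"
    by (simp add: zero_less_mult_iff)
qed

lemma row_ratios_mult_std_simplex_coords_iff:
  fixes V L :: "real mat"
  assumes V: "V \<in> carrier_mat p r" "\<forall>i<p. \<forall>k<r. V $$ (i, k) \<ge> 0"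
    and L: "L \<in> carrier_mat r r" "invertible_mat L" "\<forall>k<r. L $$ (k, 0) > 0"
    and j: "j < p" "0 < r" "(V * L) $$ (j, 0) > 0"
  shows "w \<in> std_simplex r \<and> row (ratios_to_first_col (V * L)) j = (ratios_to_first_col L)\<^sup>T *\<^sub>v w
    \<longleftrightarrow> w = vec r (\<lambda>k. V $$ (j, k) * L $$ (k, 0) / (V * L) $$ (j, 0))"
proof -
  define c where "c = (V * L) $$ (j, 0)"
  define z where "z = (1 / c) \<cdot>\<^sub>v row V j"
  have "L\<^sup>T *\<^sub>v z = (1 / c) \<cdot>\<^sub>v (L\<^sup>T *\<^sub>v row V j)"
    unfolding z_def by (rule mult_mat_vec) (use V L in auto)
  also have "\<dots> = (1 / c) \<cdot>\<^sub>v row (V * L) j"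
    using V L j by (simp only: row_mult_transpose_mult_vec)
  also have "\<dots> = vCons 1 (row (ratios_to_first_col (V * L)) j)"
    using V L j by (simp add: c_def vCons_one_row_ratios_to_first_col)
  finally have z_eq: "L\<^sup>T *\<^sub>v z = vCons 1 (row (ratios_to_first_col (V * L)) j)" .
  have z_nonneg: "\<forall>k<r. z $ k \<ge> 0"
    using V j by (simp add: z_def c_def)
  have "w \<in> std_simplex r \<and> row (ratios_to_first_col (V * L)) j = (ratios_to_first_col L)\<^sup>T *\<^sub>v w
      \<longleftrightarrow> w = vec r (\<lambda>k. L $$ (k, 0) * z $ k)"
    by (rule ratios_to_first_col_std_simplex_coords_iff[OF L _ z_nonneg z_eq]) (use V(1) j(1) in \<open>simp add: z_def\<close>)
  also have "vec r (\<lambda>k. L $$ (k, 0) * z $ k) = vec r (\<lambda>k. V $$ (j, k) * L $$ (k, 0) / c)"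
    using V j by (auto simp: z_def)
  finally show ?thesis
    unfolding c_def .
qed

lemma diag_first_col_mult_std_simplex_coords:
  fixes V L W :: "real mat"
  assumes V: "V \<in> carrier_mat p r" and L: "L \<in> carrier_mat r r" and W: "W \<in> carrier_mat p r"
    and rows: "\<forall>j<p. row W j = vec r (\<lambda>k. V $$ (j, k) * L $$ (k, 0) / (V * L) $$ (j, 0))"
    and VL: "\<forall>j<p. (V * L) $$ (j, 0) \<noteq> 0"
  shows "diag_of_vec (col (V * L) 0) * W = V * diag_of_vec (col L 0)"
proof (rule eq_matI)
  fix j k assume "j < dim_row (V * diag_of_vec (col L 0))" "k < dim_col (V * diag_of_vec (col L 0))"
  then have jk: "j < p" "k < r"
    using V L by (auto simp: diag_of_vec_def)
  have "W $$ (j, k) = row W j $ k"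
    using W jk by simp
  then have W_jk: "W $$ (j, k) = V $$ (j, k) * L $$ (k, 0) / (V * L) $$ (j, 0)"
    using rows jk by simp
  have "(diag_of_vec (col (V * L) 0) * W) $$ (j, k) = col (V * L) 0 $ j * W $$ (j, k)"
    by (rule index_diag_of_vec_mult) (use V L W jk in auto)
  also have "\<dots> = V $$ (j, k) * L $$ (k, 0)"
    using V L VL jk W_jk by simp
  also have "\<dots> = (V * diag_of_vec (col L 0)) $$ (j, k)"
    using index_mult_diag_of_vec[OF V col_carrier_vec[of 0 r L r] jk] L jk by simp
  finally show "(diag_of_vec (col (V * L) 0) * W) $$ (j, k) = (V * diag_of_vec (col L 0)) $$ (j, k)" .
qed (use V L W in \<open>auto simp: diag_of_vec_def\<close>)

theorem row_ratios_mult_std_simplex_coords: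
  fixes V L :: "real mat"
  assumes V: "V \<in> carrier_mat p r" "\<forall>i<p. \<forall>k<r. V $$ (i, k) \<ge> 0" "\<forall>k<r. \<exists>j<p. anchor_state V j k"
    and L: "L \<in> carrier_mat r r" "invertible_mat L"
    and r: "0 < r" and VL: "\<forall>j<p. (V * L) $$ (j, 0) > 0"
  shows "(\<forall>j<p. \<exists>!w. w \<in> std_simplex r \<and> row (ratios_to_first_col (V * L)) j = (ratios_to_first_col L)\<^sup>T *\<^sub>v w)
    \<and> (\<forall>W \<in> carrier_mat p r.
         (\<forall>j<p. row W j \<in> std_simplex r \<and> row (ratios_to_first_col (V * L)) j = (ratios_to_first_col L)\<^sup>T *\<^sub>v row W j)
         \<longrightarrow> diag_of_vec (col (V * L) 0) * W = V * diag_of_vec (col L 0))"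
proof -
  have L_pos: "\<forall>k<r. L $$ (k, 0) > 0"
    using anchor_states_imp_first_col_pos[OF V(1,3) L(1) VL] .
  note coords = row_ratios_mult_std_simplex_coords_iff[OF V(1,2) L L_pos _ r]
  show ?thesis
  proof (intro conjI allI impI ballI)
    fix j assume "j < p"
    then show "\<exists>!w. w \<in> std_simplex r \<and> row (ratios_to_first_col (V * L)) j = (ratios_to_first_col L)\<^sup>T *\<^sub>v w"
      using VL by (simp add: coords)
  next
    fix W assume W: "W \<in> carrier_mat p r"
      "\<forall>j<p. row W j \<in> std_simplex r \<and> row (ratios_to_first_col (V * L)) j = (ratios_to_first_col L)\<^sup>T *\<^sub>v row W j"
    then have rows: "\<forall>j<p. row W j = vec r (\<lambda>k. V $$ (j, k) * L $$ (k, 0) / (V * L) $$ (j, 0))"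
      using VL coords by blast
    show "diag_of_vec (col (V * L) 0) * W = V * diag_of_vec (col L 0)"
      by (rule diag_first_col_mult_std_simplex_coords[OF V(1) L(1) W(1) rows]) (use VL in auto)
  qed
qed

lemma stochastic_rows_imp_pos_cols:
  fixes U :: "real mat"
  assumes "U \<in> carrier_mat p r" "U *\<^sub>v vec r (\<lambda>_. 1) = vec p (\<lambda>_. 1)" "0 < p"
  shows "0 < r"
proof (rule ccontr)
  assume "\<not> 0 < r"
  have "1 = (U *\<^sub>v vec r (\<lambda>_. 1)) $ 0"
    using assms by simp
  also have "\<dots> = 0"
    using assms(1,3) \<open>\<not> 0 < r\<close> by (simp add: scalar_prod_def)
  finally show False
    by simp
qed

theorem mainTheorem15:
  fixes p r :: nat and U V P Q H L D B :: "real mat" and \<pi> :: "real vec"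
  assumes U_dim: "U \<in> carrier_mat p r" and V_dim: "V \<in> carrier_mat p r"
    and U_nonneg: "\<forall>i<p. \<forall>k<r. U $$ (i,k) \<ge> 0"
    and V_nonneg: "\<forall>i<p. \<forall>k<r. V $$ (i,k) \<ge> 0"
    and U_rows: "U *\<^sub>v vec r (\<lambda>_. 1) = vec p (\<lambda>_. 1)"
    and V_cols: "V\<^sup>T *\<^sub>v vec p (\<lambda>_. 1) = vec r (\<lambda>_. 1)"
    and P_def: "P = U * V\<^sup>T"
    and pi_dim: "\<pi> \<in> carrier_vec p"
    and pi_pos: "\<forall>i<p. \<pi> $ i > 0"
    and pi_sum: "(\<Sum>i<p. \<pi> $ i) = 1"
    and pi_stat: "P\<^sup>T *\<^sub>v \<pi> = \<pi>"
    and anchors: "\<forall>k<r. \<exists>j<p. anchor_state V j k"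
    and rank_U: "vec_space.rank p U = r"
    and Q_def: "Q = diag_of_vec \<pi> * P * diag_of_vec (map_vec (\<lambda>x. inverse (sqrt x)) \<pi>)"
    and H_svd: "right_sing_vecs_nonzero p r Q H"
    and h1_pos: "\<forall>i<p. H $$ (i,0) > 0"
    and D_def: "D = diag_of_vec (map_vec inverse (col H 0)) * mat p (r - 1) (\<lambda>(i,m). H $$ (i, m + 1))"
    and L_dim: "L \<in> carrier_mat r r" and L_inv: "invertible_mat L"
    and H_eq: "H = diag_of_vec (map_vec (\<lambda>x. inverse (sqrt x)) \<pi>) * V * L"
    and B_def: "B = diag_of_vec (map_vec inverse (col L 0)) * mat r (r - 1) (\<lambda>(k,m). L $$ (k, m + 1))"
  shows "(\<forall>j<p. \<exists>!w. w \<in> std_simplex r \<and> row D j = B\<^sup>T *\<^sub>v w)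
    \<and> (\<forall>W \<in> carrier_mat p r. (\<forall>j<p. row W j \<in> std_simplex r \<and> row D j = B\<^sup>T *\<^sub>v row W j) \<longrightarrow>
         diag_of_vec (col H 0) * diag_of_vec (map_vec sqrt \<pi>) * W = V * diag_of_vec (col L 0))"
proof -
  define s where "s = map_vec (\<lambda>x. inverse (sqrt x)) \<pi>"
  have s: "s \<in> carrier_vec p" "\<forall>i<p. s $ i > 0"
    using pi_dim pi_pos by (auto simp: s_def)
  have VL: "V * L \<in> carrier_mat p r"
    using V_dim L_dim by simp
  have H: "H = diag_of_vec s * (V * L)"
    using H_eq V_dim L_dim s by (simp add: s_def diag_of_vec_def assoc_mult_mat[of _ p p _ r _ r])
  have sqrt_pi: "map_vec sqrt \<pi> = map_vec inverse s"
    using pi_dim by (auto simp: s_def)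
  show ?thesis
  proof (cases "p = 0")
    case True
    then show ?thesis
      using V_dim L_dim VL s pi_dim by (auto simp: H diag_of_vec_def)
  next
    case False
    then have r: "0 < r"
      using stochastic_rows_imp_pos_cols[OF U_dim U_rows] by simp
    have "H \<in> carrier_mat p r"
      unfolding H by (rule mult_carrier_mat[OF _ VL]) (use s in \<open>simp add: diag_of_vec_def\<close>)
    then have "D = ratios_to_first_col H"
      by (simp add: D_def ratios_to_first_col_def)
    also have "\<dots> = ratios_to_first_col (V * L)"
      unfolding H using s(2) by (intro ratios_to_first_col_diag_mult[OF VL s(1)]) auto
    finally have D: "D = ratios_to_first_col (V * L)" .
    have B: "B = ratios_to_first_col L"
      using B_def L_dim by (simp add: ratios_to_first_col_def)
    have diag_H_pi: "diag_of_vec (col H 0) * diag_of_vec (map_vec sqrt \<pi>) = diag_of_vec (col (V * L) 0)"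
      unfolding H sqrt_pi using VL r s by (intro diag_first_col_diag_of_vec_mult) auto
    have "\<forall>j<p. (V * L) $$ (j, 0) > 0"
      using h1_pos s r VL by (force simp: H index_diag_of_vec_mult zero_less_mult_iff)
    then show ?thesis
      unfolding D B diag_H_pi by (rule row_ratios_mult_std_simplex_coords[OF V_dim V_nonneg anchors L_dim L_inv r])
  qed
qed

end
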